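(* Fix $0<d<1$ and let $c(x)=x^d$. For any game with $n$ jobs and cost function $c$, any Nash equilibrium $s$ and any optimal assignment $s^*$, we have $\frac{C(s)}{C(s^* )}=O\!\left(n^{\frac{1-d}{2}}\right)$.
   Context: A game is specified by a cost function $c$ (here $c(x)=x^d$, $c(0)=0$), a time horizon $T$ with slots $t=1,\dots,T$, and a set of $n$ jobs, each job $j$ having integer release time $r_j$ and integer deadline $d_j$ with $0<r_j<d_j<T$. An assignment $s$ gives each job $j$ a slot $s_j$ with $r_j\le s_j<d_j$. The load of slot $t$ is $l_t(s)=|\{j:s_j=t\}|$ and $C(s)=\sum_{t=1}^T c(l_t(s))$. An assignment $s$ is a Nash equilibrium if for every job $j$ and every slot $t\neq s_j$ with $r_j\le t<d_j$: $\frac{c(l_{s_j}(s))}{l_{s_j}(s)}\le\frac{c(l_t(s)+1)}{l_t(s)+1}$. An optimal assignment is one minimizing $C$ over all assignments. *)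

theory Defs
  imports Complex_Main
begin

text \<open>Jobs are indexed by 0..<n; job j has release time r j and deadline dl j.
  Slots are 1..T. Cost function c(x) = x^e with exponent e (0 powr e = 0).\<close>

definition cost :: "real \<Rightarrow> nat \<Rightarrow> real" where
  "cost e x = real x powr e"

definition valid_game :: "nat \<Rightarrow> nat \<Rightarrow> (nat \<Rightarrow> nat) \<Rightarrow> (nat \<Rightarrow> nat) \<Rightarrow> bool" where
  "valid_game T n r dl \<longleftrightarrow> (\<forall>j<n. 0 < r j \<and> r j < dl j \<and> dl j < T)"

definition assignment :: "nat \<Rightarrow> (nat \<Rightarrow> nat) \<Rightarrow> (nat \<Rightarrow> nat) \<Rightarrow> (nat \<Rightarrow> nat) \<Rightarrow> bool" where
  "assignment n r dl s \<longleftrightarrow> (\<forall>j<n. r j \<le> s j \<and> s j < dl j)"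

definition load :: "nat \<Rightarrow> (nat \<Rightarrow> nat) \<Rightarrow> nat \<Rightarrow> nat" where
  "load n s t = card {j. j < n \<and> s j = t}"

definition total_cost :: "real \<Rightarrow> nat \<Rightarrow> nat \<Rightarrow> (nat \<Rightarrow> nat) \<Rightarrow> real" where
  "total_cost e T n s = (\<Sum>t = 1..T. cost e (load n s t))"

definition nash_eq :: "real \<Rightarrow> nat \<Rightarrow> (nat \<Rightarrow> nat) \<Rightarrow> (nat \<Rightarrow> nat) \<Rightarrow> (nat \<Rightarrow> nat) \<Rightarrow> bool" where
  "nash_eq e n r dl s \<longleftrightarrow> assignment n r dl s \<and>
     (\<forall>j<n. \<forall>t. t \<noteq> s j \<and> r j \<le> t \<and> t < dl j \<longrightarrow>
        cost e (load n s (s j)) / real (load n s (s j))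
          \<le> cost e (load n s t + 1) / real (load n s t + 1))"

definition optimal :: "real \<Rightarrow> nat \<Rightarrow> nat \<Rightarrow> (nat \<Rightarrow> nat) \<Rightarrow> (nat \<Rightarrow> nat) \<Rightarrow> (nat \<Rightarrow> nat) \<Rightarrow> bool" where
  "optimal e T n r dl s \<longleftrightarrow> assignment n r dl s \<and>
     (\<forall>s'. assignment n r dl s' \<longrightarrow> total_cost e T n s \<le> total_cost e T n s')"

end

theory Submission
  imports Defs
begin

text \<open>Charge every job the share \<open>L powr (e - 1)\<close> of the cost \<open>L powr e\<close> of its slot,
  \<open>L\<close> being the load of that slot, so that \<open>C(s)\<close> is the sum of all shares. Fix a slot \<open>u\<close>
  of the comparison assignment and the \<open>m\<close> jobs it serves; all of them could move to \<open>u\<close>.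
  Those sitting on slots of load at least \<open>sqrt m\<close> pay at most \<open>m * sqrt m powr (e - 1)\<close>
  together. In a Nash equilibrium the loads of their slots strictly increase away from \<open>u\<close>,
  so at most \<open>2 sqrt m + 1\<close> of these slots have load below \<open>sqrt m\<close>, each collecting at
  most \<open>sqrt m powr e\<close>. The group thus pays at most \<open>4 m powr ((1 + e) / 2)\<close>, which is
  at most \<open>4 n powr ((1 - e) / 2) * m powr e\<close>; summing over \<open>u\<close> gives the bound with
  \<open>K = 4\<close>.\<close>

definition cost_share :: "real \<Rightarrow> nat \<Rightarrow> (nat \<Rightarrow> nat) \<Rightarrow> nat \<Rightarrow> real" where
  "cost_share e n s j = real (load n s (s j)) powr (e - 1)"

lemma load_pos: "j < n \<Longrightarrow> 0 < load n s (s j)"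
  unfolding load_def by (subst card_gt_0_iff) auto

lemma load_le: "load n s t \<le> n"
  unfolding load_def using card_mono[of "{..<n}" "{j. j < n \<and> s j = t}"] by auto

lemma sum_cost_share_slot:
  "(\<Sum>j | j < n \<and> s j = t. cost_share e n s j) = cost e (load n s t)"
proof -
  have "(\<Sum>j | j < n \<and> s j = t. cost_share e n s j)
      = (\<Sum>j | j < n \<and> s j = t. real (load n s t) powr (e - 1))"
    unfolding cost_share_def by (rule sum.cong) auto
  also have "\<dots> = real (load n s t) * real (load n s t) powr (e - 1)"
    by (simp add: load_def)
  also have "\<dots> = cost e (load n s t)"
    unfolding cost_def by (simp add: powr_mult_base)
  finally show ?thesis .
qed

lemma sum_cost_share_slot_le:
  assumes "X \<subseteq> {j. j < n \<and> s j = t}"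
  shows "(\<Sum>j\<in>X. cost_share e n s j) \<le> real (load n s t) powr e"
proof -
  have "(\<Sum>j\<in>X. cost_share e n s j) \<le> (\<Sum>j | j < n \<and> s j = t. cost_share e n s j)"
    using assms by (intro sum_mono2) (auto simp: cost_share_def)
  then show ?thesis by (simp add: sum_cost_share_slot cost_def)
qed

lemma total_cost_eq_sum_cost_share:
  assumes "\<And>j. j < n \<Longrightarrow> s j \<in> {1..T}"
  shows "total_cost e T n s = (\<Sum>j<n. cost_share e n s j)"
proof -
  have "s ` {..<n} \<subseteq> {1..T}" using assms by auto
  then have "(\<Sum>j<n. cost_share e n s j) = (\<Sum>t = 1..T. \<Sum>j | j < n \<and> s j = t. cost_share e n s j)"
    using sum.group[of "{..<n}" "{1..T}" s "cost_share e n s"] by simp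
  then show ?thesis unfolding total_cost_def by (simp add: sum_cost_share_slot)
qed

lemma nash_eq_load_less:
  assumes "nash_eq e n r dl s" "e < 1" "j < n" "r j \<le> t" "t < dl j" "t \<noteq> s j"
  shows "load n s t < load n s (s j)"
proof (rule ccontr)
  let ?a = "real (load n s (s j))" and ?b = "real (load n s t + 1)"
  assume "\<not> ?thesis"
  then have "?a < ?b" by simp
  moreover have "0 < ?a" using load_pos assms(3) by simp
  ultimately have "?b powr (e - 1) < ?a powr (e - 1)"
    using assms(2) by (intro powr_less_mono2_neg) auto
  moreover have "?a powr e / ?a \<le> ?b powr e / ?b"
    using assms unfolding nash_eq_def cost_def by blast
  then have "?a powr (e - 1) \<le> ?b powr (e - 1)"
    using \<open>0 < ?a\<close> by (simp add: powr_diff)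
  ultimately show False by simp
qed

lemma nash_eq_card_low_load_slots:
  assumes ne: "nash_eq e n r dl s" "e < 1"
    and J: "\<And>j. j \<in> J \<Longrightarrow> j < n \<and> r j \<le> u \<and> u < dl j"
  shows "card {t \<in> s ` J. load n s t \<le> k} \<le> 2 * k + 1"
proof -
  define S where "S = {t \<in> s ` J. load n s t \<le> k}"
  define R where "R = {t \<in> S. u < t}"
  define Q where "Q = {t \<in> S. t < u}"
  have "finite J" using J by (meson finite_lessThan finite_subset lessThan_iff subsetI)
  then have finS: "finite S" unfolding S_def by simp
  have "assignment n r dl s" using ne unfolding nash_eq_def by blast
  then have between: "load n s t < load n s (s j)"
    if "j \<in> J" "min u (s j) \<le> t" "t \<le> max u (s j)" "t \<noteq> s j" for j t
    using that J[OF that(1)] by (intro nash_eq_load_less[OF ne]) (auto simp: assignment_def)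
  have "load n s t \<in> {1..k}" if "t \<in> S" for t
  proof -
    obtain j where "j \<in> J" "t = s j" "load n s t \<le> k" using \<open>t \<in> S\<close> unfolding S_def by auto
    then show ?thesis using J load_pos[of j n s] by (auto simp: Suc_le_eq)
  qed
  then have loads: "load n s ` X \<subseteq> {1..k}" if "X \<subseteq> S" for X
    using that by auto
  have "inj_on (load n s) R"
  proof (rule linorder_inj_onI')
    fix t t' assume "t \<in> R" "t' \<in> R" "t < t'"
    then obtain j where "j \<in> J" "s j = t'" "u < t" unfolding R_def S_def by auto
    then show "load n s t \<noteq> load n s t'"
      using between[of j t] \<open>t < t'\<close> by auto
  qed
  then have "card R \<le> k"
    using card_inj_on_le[of "load n s" R "{1..k}"] loads[of R] by (auto simp: R_def)
  moreover have "inj_on (load n s) Q"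
  proof (rule linorder_inj_onI')
    fix t t' assume "t \<in> Q" "t' \<in> Q" "t < t'"
    then obtain j where "j \<in> J" "s j = t" "t' < u" unfolding Q_def S_def by auto
    then show "load n s t \<noteq> load n s t'"
      using between[of j t'] \<open>t < t'\<close> by auto
  qed
  then have "card Q \<le> k"
    using card_inj_on_le[of "load n s" Q "{1..k}"] loads[of Q] by (auto simp: Q_def)
  moreover have "card S \<le> card {u} + card R + card Q"
  proof -
    have "S \<subseteq> {u} \<union> R \<union> Q" unfolding R_def Q_def by auto
    then have "card S \<le> card ({u} \<union> R \<union> Q)"
      using finS by (intro card_mono) (auto simp: R_def Q_def)
    also have "\<dots> \<le> card {u} + card R + card Q"
      by (metis card_Un_le add_le_mono1 le_trans)
    finally show ?thesis .
  qed
  ultimately show ?thesis unfolding S_def by simp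
qed

lemma powr_one_plus_half_le:
  fixes x y e :: real
  assumes "0 \<le> x" "x \<le> y" "e \<le> 1"
  shows "x powr ((1 + e) / 2) \<le> y powr ((1 - e) / 2) * x powr e"
proof (cases "x = 0")
  case False
  have "x powr ((1 + e) / 2) = x powr ((1 - e) / 2) * x powr e"
    by (simp add: powr_add[symmetric] add_divide_distrib diff_divide_distrib add.commute)
  also have "\<dots> \<le> y powr ((1 - e) / 2) * x powr e"
    using assms by (intro mult_right_mono powr_mono2) auto
  finally show ?thesis .
qed simp

lemma sum_cost_share_high_load_le:
  assumes "finite J" "e \<le> 1" "0 < lam"
  shows "(\<Sum>j\<in>{j \<in> J. lam \<le> real (load n s (s j))}. cost_share e n s j)
    \<le> real (card J) * lam powr (e - 1)"
proof -
  have "(\<Sum>j\<in>{j \<in> J. lam \<le> real (load n s (s j))}. cost_share e n s j)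
      \<le> real (card {j \<in> J. lam \<le> real (load n s (s j))}) * lam powr (e - 1)"
    using assms unfolding cost_share_def by (intro sum_bounded_above powr_mono2') auto
  also have "\<dots> \<le> real (card J) * lam powr (e - 1)"
    using assms(1) by (intro mult_right_mono) (auto simp: card_mono)
  finally show ?thesis .
qed

lemma nash_eq_sum_cost_share_low_load_le:
  assumes ne: "nash_eq e n r dl s" "0 \<le> e" "e < 1"
    and J: "\<And>j. j \<in> J \<Longrightarrow> j < n \<and> r j \<le> u \<and> u < dl j"
    and "0 \<le> lam"
  shows "(\<Sum>j\<in>{j \<in> J. real (load n s (s j)) < lam}. cost_share e n s j) \<le> (2 * lam + 1) * lam powr e"
proof -
  define Jlo where "Jlo = {j \<in> J. real (load n s (s j)) < lam}"
  have "finite J" using J by (meson finite_lessThan finite_subset lessThan_iff subsetI)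
  then have "finite Jlo" unfolding Jlo_def by simp
  have "(\<Sum>j\<in>Jlo. cost_share e n s j) = (\<Sum>t\<in>s ` Jlo. \<Sum>j\<in>{j \<in> Jlo. s j = t}. cost_share e n s j)"
    by (rule sum.image_gen[OF \<open>finite Jlo\<close>])
  also have "\<dots> \<le> (\<Sum>t\<in>s ` Jlo. lam powr e)"
  proof (rule sum_mono)
    fix t assume "t \<in> s ` Jlo"
    then have "real (load n s t) < lam" unfolding Jlo_def by auto
    have "(\<Sum>j\<in>{j \<in> Jlo. s j = t}. cost_share e n s j) \<le> real (load n s t) powr e"
      using J by (intro sum_cost_share_slot_le) (auto simp: Jlo_def)
    also have "\<dots> \<le> lam powr e"
      using \<open>real (load n s t) < lam\<close> ne(2) by (intro powr_mono2) auto
    finally show "(\<Sum>j\<in>{j \<in> Jlo. s j = t}. cost_share e n s j) \<le> lam powr e" .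
  qed
  also have "\<dots> \<le> (2 * lam + 1) * lam powr e"
  proof -
    define k where "k = nat \<lfloor>lam\<rfloor>"
    have "s ` Jlo \<subseteq> {t \<in> s ` J. load n s t \<le> k}"
      unfolding Jlo_def k_def by (auto simp: le_nat_floor less_imp_le)
    then have "card (s ` Jlo) \<le> card {t \<in> s ` J. load n s t \<le> k}"
      using \<open>finite J\<close> by (intro card_mono) auto
    also have "\<dots> \<le> 2 * k + 1"
      using ne(1,3) J by (rule nash_eq_card_low_load_slots)
    finally have "real (card (s ` Jlo)) \<le> 2 * lam + 1"
      using \<open>0 \<le> lam\<close> of_nat_floor[of lam] unfolding k_def by linarith
    then show ?thesis by (simp add: mult_right_mono)
  qed
  finally show ?thesis unfolding Jlo_def .
qed

lemma nash_eq_sum_cost_share_le: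
  assumes ne: "nash_eq e n r dl s" and e: "0 < e" "e < 1"
    and J: "\<And>j. j \<in> J \<Longrightarrow> j < n \<and> r j \<le> u \<and> u < dl j"
  shows "(\<Sum>j\<in>J. cost_share e n s j) \<le> 4 * real (card J) powr ((1 + e) / 2)"
proof (cases "J = {}")
  case False
  have "finite J" using J by (meson finite_lessThan finite_subset lessThan_iff subsetI)
  define lam where "lam = sqrt (real (card J))"
  have lam1: "1 \<le> lam"
    unfolding lam_def using False \<open>finite J\<close> by (simp add: Suc_le_eq card_gt_0_iff)
  let ?hi = "{j \<in> J. lam \<le> real (load n s (s j))}" and ?lo = "{j \<in> J. real (load n s (s j)) < lam}"
  have "(\<Sum>j\<in>J. cost_share e n s j) = (\<Sum>j\<in>?hi \<union> ?lo. cost_share e n s j)"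
    by (rule sum.cong) auto
  also have "\<dots> = (\<Sum>j\<in>?hi. cost_share e n s j) + (\<Sum>j\<in>?lo. cost_share e n s j)"
    using \<open>finite J\<close> by (intro sum.union_disjoint) auto
  also have "\<dots> \<le> real (card J) * lam powr (e - 1) + (2 * lam + 1) * lam powr e"
    using lam1 e \<open>finite J\<close> J
    by (intro add_mono sum_cost_share_high_load_le nash_eq_sum_cost_share_low_load_le[OF ne]) auto
  also have "\<dots> \<le> 4 * (lam * lam powr e)"
  proof -
    have "real (card J) * lam powr (e - 1) = lam * (lam * lam powr (e - 1))"
      unfolding lam_def by simp
    also have "\<dots> = lam * lam powr e"
      using lam1 by (simp add: powr_mult_base)
    finally have "real (card J) * lam powr (e - 1) = lam * lam powr e" .
    then show ?thesis using lam1 by (simp add: mult_right_mono)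
  qed
  also have "lam * lam powr e = lam powr (1 + e)"
    using lam1 by (simp add: powr_mult_base)
  also have "\<dots> = real (card J) powr ((1 + e) / 2)"
    unfolding lam_def by (simp add: powr_half_sqrt[symmetric] powr_powr)
  finally show ?thesis .
qed simp

theorem lemma1:
  fixes e :: real
  assumes "0 < e" and "e < 1"
  shows "\<exists>K N. \<forall>n \<ge> N. \<forall>T r dl s s'.
           valid_game T n r dl \<and> nash_eq e n r dl s \<and> optimal e T n r dl s' \<longrightarrow>
           total_cost e T n s \<le> K * real n powr ((1 - e) / 2) * total_cost e T n s'"
proof -
  have "total_cost e T n s \<le> 4 * real n powr ((1 - e) / 2) * total_cost e T n s'"
    if "valid_game T n r dl" "nash_eq e n r dl s" "optimal e T n r dl s'" for T n r dl s s'
  proof -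
    have "assignment n r dl s" "assignment n r dl s'"
      using that unfolding nash_eq_def optimal_def by auto
    then have slots: "s j \<in> {1..T}" "s' j \<in> {1..T}" "r j \<le> s' j \<and> s' j < dl j" if "j < n" for j
      using that \<open>valid_game T n r dl\<close> unfolding assignment_def valid_game_def by fastforce+
    have "total_cost e T n s = (\<Sum>j<n. cost_share e n s j)"
      using slots by (intro total_cost_eq_sum_cost_share) auto
    also have "\<dots> = (\<Sum>u = 1..T. \<Sum>j | j < n \<and> s' j = u. cost_share e n s j)"
      using sum.group[of "{..<n}" "{1..T}" s' "cost_share e n s"] slots by (simp add: image_subset_iff)
    also have "\<dots> \<le> (\<Sum>u = 1..T. 4 * real (load n s' u) powr ((1 + e) / 2))"
    proof (rule sum_mono)
      fix u
      show "(\<Sum>j | j < n \<and> s' j = u. cost_share e n s j) \<le> 4 * real (load n s' u) powr ((1 + e) / 2)"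
        using nash_eq_sum_cost_share_le[OF \<open>nash_eq e n r dl s\<close> assms, of "{j. j < n \<and> s' j = u}" u]
          slots(3) unfolding load_def by blast
    qed
    also have "\<dots> \<le> (\<Sum>u = 1..T. 4 * (real n powr ((1 - e) / 2) * real (load n s' u) powr e))"
      using assms load_le by (intro sum_mono mult_left_mono powr_one_plus_half_le) auto
    also have "\<dots> = 4 * real n powr ((1 - e) / 2) * total_cost e T n s'"
      unfolding total_cost_def cost_def by (simp add: sum_distrib_left mult.assoc)
    finally show ?thesis .
  qed
  then show ?thesis by blast
qed

end
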